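(* Let $c \geq 5$ be an integer, let $G$ be a graph, and let $v$ be a vertex of $G$ having a neighbor of degree $2$. Let $Y=\{v\}\cup N_{G,1}(v)\cup N_{G,2}(v)$. If $G$ has no PCF $c$-coloring, but $(G,Y)$ has a semi-PCF $c$-coloring, then $2d(v) - 2n_1(v) - n_2(v) \geq c$.
   Context: $N_{G,d}(v)$ is the set of neighbors of $v$ of degree exactly $d$ in $G$, and $n_d(v)=|N_{G,d}(v)|$; $d(v)$ is the degree of $v$ in $G$. A PCF $c$-coloring of a graph is a proper coloring with at most $c$ colors in which every non-isolated vertex has a color appearing exactly once in its open neighborhood. For $Y\subseteq V(G)$, let $Z$ be the set of vertices of $G-Y$ having degree exactly $2$ in $G-Y$. A semi-PCF $c$-coloring of $(G,Y)$ is a proper $c$-coloring $\phi$ of $G-Y$ such that every vertex of $V(G-Y)\setminus (N_G(Y)\cap Z)$ has a color appearing exactly once (under $\phi$) among its neighbors in $G-Y$. *)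

theory Defs
  imports Main
begin

definition simple_graph :: "'a set \<Rightarrow> ('a \<Rightarrow> 'a \<Rightarrow> bool) \<Rightarrow> bool" where
  "simple_graph V E \<longleftrightarrow> finite V \<and> (\<forall>u w. E u w \<longrightarrow> u \<in> V \<and> w \<in> V)
     \<and> (\<forall>u w. E u w \<longrightarrow> E w u) \<and> (\<forall>u. \<not> E u u)"

definition nbrs :: "'a set \<Rightarrow> ('a \<Rightarrow> 'a \<Rightarrow> bool) \<Rightarrow> 'a \<Rightarrow> 'a set" where
  "nbrs V E v = {u \<in> V. E v u}"

definition deg :: "'a set \<Rightarrow> ('a \<Rightarrow> 'a \<Rightarrow> bool) \<Rightarrow> 'a \<Rightarrow> nat" where
  "deg V E v = card (nbrs V E v)"

definition nbrs_deg :: "'a set \<Rightarrow> ('a \<Rightarrow> 'a \<Rightarrow> bool) \<Rightarrow> nat \<Rightarrow> 'a \<Rightarrow> 'a set" where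
  "nbrs_deg V E d v = {u \<in> nbrs V E v. deg V E u = d}"

definition set_nbrs :: "'a set \<Rightarrow> ('a \<Rightarrow> 'a \<Rightarrow> bool) \<Rightarrow> 'a set \<Rightarrow> 'a set" where
  "set_nbrs V E Y = (\<Union>y\<in>Y. nbrs V E y)"

definition del_verts_V :: "'a set \<Rightarrow> 'a set \<Rightarrow> 'a set" where
  "del_verts_V V Y = V - Y"

definition del_verts_E :: "('a \<Rightarrow> 'a \<Rightarrow> bool) \<Rightarrow> 'a set \<Rightarrow> 'a \<Rightarrow> 'a \<Rightarrow> bool" where
  "del_verts_E E Y = (\<lambda>u w. E u w \<and> u \<notin> Y \<and> w \<notin> Y)"

definition proper_coloring :: "'a set \<Rightarrow> ('a \<Rightarrow> 'a \<Rightarrow> bool) \<Rightarrow> nat \<Rightarrow> ('a \<Rightarrow> nat) \<Rightarrow> bool" where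
  "proper_coloring V E c \<phi> \<longleftrightarrow> (\<forall>v\<in>V. \<phi> v < c)
     \<and> (\<forall>u\<in>V. \<forall>w\<in>V. E u w \<longrightarrow> \<phi> u \<noteq> \<phi> w)"

definition has_unique_color :: "('a \<Rightarrow> nat) \<Rightarrow> 'a set \<Rightarrow> bool" where
  "has_unique_color \<phi> S \<longleftrightarrow> (\<exists>col. card {u \<in> S. \<phi> u = col} = 1)"

definition pcf_coloring :: "'a set \<Rightarrow> ('a \<Rightarrow> 'a \<Rightarrow> bool) \<Rightarrow> nat \<Rightarrow> ('a \<Rightarrow> nat) \<Rightarrow> bool" where
  "pcf_coloring V E c \<phi> \<longleftrightarrow> proper_coloring V E c \<phi>
     \<and> (\<forall>v\<in>V. nbrs V E v \<noteq> {} \<longrightarrow> has_unique_color \<phi> (nbrs V E v))"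

definition semi_pcf_coloring ::
  "'a set \<Rightarrow> ('a \<Rightarrow> 'a \<Rightarrow> bool) \<Rightarrow> 'a set \<Rightarrow> nat \<Rightarrow> ('a \<Rightarrow> nat) \<Rightarrow> bool" where
  "semi_pcf_coloring V E Y c \<phi> \<longleftrightarrow>
     (let V' = del_verts_V V Y; E' = del_verts_E E Y;
          Z = {u \<in> V'. deg V' E' u = 2}
      in proper_coloring V' E' c \<phi>
         \<and> (\<forall>u \<in> V' - (set_nbrs V E Y \<inter> Z). has_unique_color \<phi> (nbrs V' E' u)))"

end

theory Submission
  imports Defs
begin

text \<open>Suppose 2|R| + n_2(v) < c, where R is the set of neighbours of v outside Y, and extend
  the semi-PCF colouring \<phi> of G - Y to G. The vertex v gets a colour \<alpha> avoiding the at
  most 2|R| + n_2(v) colours that would clash with it; one degree-2 neighbour u0 gets a colour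
  \<delta> occurring nowhere else in N(v); leaves at v and triangles through v use two more spare
  colours; every other degree-2 neighbour avoids at most four colours, which c \<ge> 5 allows.
  The vertices of G - Y that may lack a unique colour are those whose two neighbours in G - Y
  share a colour. Such a vertex either sees v, whose colour is then unique there, or has a
  degree-2 neighbour of v attached to it, one of which is coloured to be unique.\<close>

definition fresh_color :: "nat set \<Rightarrow> nat" where
  "fresh_color S = (LEAST k. k \<notin> S)"

lemma fresh_color_le_card:
  assumes "finite S"
  shows "fresh_color S \<notin> S \<and> fresh_color S \<le> card S"
proof -
  have "\<not> {0..card S} \<subseteq> S"
  proof
    assume "{0..card S} \<subseteq> S"
    then have "card {0..card S} \<le> card S" by (rule card_mono[OF assms])
    then show False by simp
  qed
  then obtain k where "k \<in> {0..card S}" and "k \<notin> S" by blast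
  then show ?thesis
    unfolding fresh_color_def by (metis LeastI Least_le atLeastAtMost_iff order_trans)
qed

lemma fresh_color_less:
  "finite S \<Longrightarrow> card S < c \<Longrightarrow> fresh_color S \<notin> S \<and> fresh_color S < c"
  using fresh_color_le_card by fastforce

lemma fresh_color_list_less:
  "length xs < c \<Longrightarrow> fresh_color (set xs) \<notin> set xs \<and> fresh_color (set xs) < c"
  using fresh_color_less[of "set xs" c] card_length[of xs] by simp

lemma has_unique_colorI:
  assumes "a \<in> S" and "\<And>u. u \<in> S \<Longrightarrow> f u = f a \<Longrightarrow> u = a"
  shows "has_unique_color f S"
proof -
  have "{u \<in> S. f u = f a} = {a}" using assms by auto
  then show ?thesis unfolding has_unique_color_def by (metis is_singleton_altdef is_singleton_def)
qed

lemma has_unique_color_pair: "\<not> has_unique_color f {a, b} \<Longrightarrow> f a = f b"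
  by (metis has_unique_colorI insert_iff singletonD)

lemma mem_nbrs_iff: "simple_graph V E \<Longrightarrow> u \<in> nbrs V E x \<longleftrightarrow> E x u"
  by (auto simp: simple_graph_def nbrs_def)

lemma finite_nbrs: "simple_graph V E \<Longrightarrow> finite (nbrs V E x)"
  by (auto simp: simple_graph_def nbrs_def)

lemma nbrs_del_verts:
  "x \<notin> Y \<Longrightarrow> nbrs (del_verts_V V Y) (del_verts_E E Y) x = nbrs V E x - Y"
  by (auto simp: nbrs_def del_verts_V_def del_verts_E_def)

lemma nbrs_of_nbrs_deg_1:
  assumes "simple_graph V E" and "u \<in> nbrs_deg V E 1 v"
  shows "nbrs V E u = {v}"
proof -
  have "card (nbrs V E u) = 1" and "v \<in> nbrs V E u"
    using assms by (auto simp: nbrs_deg_def deg_def mem_nbrs_iff simple_graph_def)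
  then show ?thesis by (metis card_1_singletonE singletonD)
qed

lemma nbrs_of_nbrs_deg_2:
  assumes "simple_graph V E" and "u \<in> nbrs_deg V E 2 v"
  shows "\<exists>w. w \<noteq> v \<and> nbrs V E u = {v, w}"
proof -
  have "card (nbrs V E u) = 2" and "v \<in> nbrs V E u"
    using assms by (auto simp: nbrs_deg_def deg_def mem_nbrs_iff simple_graph_def)
  then show ?thesis by (metis card_2_iff insert_commute insertE singletonD)
qed

lemma deg_split_low_degree_nbrs:
  assumes "simple_graph V E"
  shows "deg V E v = card (nbrs V E v - ({v} \<union> nbrs_deg V E 1 v \<union> nbrs_deg V E 2 v))
    + card (nbrs_deg V E 1 v) + card (nbrs_deg V E 2 v)"
proof -
  let ?N = "nbrs V E v" and ?N1 = "nbrs_deg V E 1 v" and ?N2 = "nbrs_deg V E 2 v"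
  have sub: "?N1 \<union> ?N2 \<subseteq> ?N" and fin: "finite ?N"
    using finite_nbrs[OF assms] by (auto simp: nbrs_deg_def)
  have "v \<notin> ?N" using assms by (simp add: mem_nbrs_iff simple_graph_def)
  then have "?N - ({v} \<union> ?N1 \<union> ?N2) = ?N - (?N1 \<union> ?N2)" by blast
  moreover have "card (?N1 \<union> ?N2) = card ?N1 + card ?N2"
    using fin sub by (intro card_Un_disjoint) (auto simp: nbrs_deg_def intro: finite_subset)
  moreover have "card (?N - (?N1 \<union> ?N2)) + card (?N1 \<union> ?N2) = card ?N"
    using fin sub by (metis card_Diff_subset card_mono finite_subset le_add_diff_inverse2)
  ultimately show ?thesis unfolding deg_def by (simp add: add.assoc)
qed

text \<open>Since d(v) = |R| + n_1(v) + n_2(v), the last assumption is the negation of the claim.\<close>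

locale semi_pcf_extension =
  fixes V :: "'a set" and E :: "'a \<Rightarrow> 'a \<Rightarrow> bool" and c :: nat and v :: 'a
    and \<phi> :: "'a \<Rightarrow> nat" and u0 :: 'a
  assumes graph: "simple_graph V E"
    and five_colors: "5 \<le> c"
    and u0_deg_2: "u0 \<in> nbrs_deg V E 2 v"
    and semi_pcf: "semi_pcf_coloring V E ({v} \<union> nbrs_deg V E 1 v \<union> nbrs_deg V E 2 v) c \<phi>"
    and few_high_degree_nbrs:
      "2 * card (nbrs V E v - ({v} \<union> nbrs_deg V E 1 v \<union> nbrs_deg V E 2 v))
        + card (nbrs_deg V E 2 v) < c"
begin

abbreviation "N \<equiv> nbrs V E"
abbreviation "N1 \<equiv> nbrs_deg V E 1 v"
abbreviation "N2 \<equiv> nbrs_deg V E 2 v"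
abbreviation "Y \<equiv> {v} \<union> N1 \<union> N2"
abbreviation "R \<equiv> N v - Y"
abbreviation "N' \<equiv> nbrs (del_verts_V V Y) (del_verts_E E Y)"

lemma adj_sym: "E a b \<Longrightarrow> E b a" and adj_irrefl: "\<not> E a a"
  using graph unfolding simple_graph_def by blast+

lemma mem_N: "u \<in> N x \<longleftrightarrow> E x u"
  using mem_nbrs_iff[OF graph] .

lemma N1_nbrs: "u \<in> N1 \<Longrightarrow> N u = {v}"
  using nbrs_of_nbrs_deg_1[OF graph] .

lemma N1_N2_adj: "u \<in> N1 \<union> N2 \<Longrightarrow> E v u"
  by (auto simp: nbrs_deg_def mem_N)

lemma v_notin_N1: "v \<notin> N1" and v_notin_N2: "v \<notin> N2"
  using adj_irrefl N1_N2_adj by blast+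

lemma N1_N2_disjoint: "u \<in> N2 \<Longrightarrow> u \<notin> N1"
  by (auto simp: nbrs_deg_def)

lemma finite_R: "finite R" and finite_N2: "finite N2"
  using finite_nbrs[OF graph] by (auto simp: nbrs_deg_def)

definition partner :: "'a \<Rightarrow> 'a" where
  "partner u = (SOME w. w \<noteq> v \<and> N u = {v, w})"

lemma N2_nbrs: "u \<in> N2 \<Longrightarrow> partner u \<noteq> v \<and> N u = {v, partner u}"
  unfolding partner_def using someI_ex[OF nbrs_of_nbrs_deg_2[OF graph]] .

lemma partner_adj: "u \<in> N2 \<Longrightarrow> E u (partner u)"
  using N2_nbrs mem_N by blast

lemma partner_in_Y:
  assumes "u \<in> N2" and "partner u \<in> Y"
  shows "partner u \<in> N2 \<and> partner (partner u) = u"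
proof -
  have u_nbr: "u \<in> N (partner u)"
    using partner_adj[OF assms(1)] adj_sym mem_N by blast
  have "u \<noteq> v" using assms(1) v_notin_N2 by blast
  have "partner u \<notin> N1"
  proof
    assume "partner u \<in> N1"
    then have "N (partner u) = {v}" by (rule N1_nbrs)
    with u_nbr \<open>u \<noteq> v\<close> show False by simp
  qed
  moreover have "partner u \<noteq> v" using N2_nbrs[OF assms(1)] by (rule conjunct1)
  ultimately have partner_N2: "partner u \<in> N2" using assms(2) by blast
  with u_nbr \<open>u \<noteq> v\<close> show ?thesis using N2_nbrs[OF partner_N2] by simp
qed

lemma Y_nbr_of_outside:
  assumes "E x y" and "x \<notin> Y" and "y \<in> Y"
  shows "y = v \<or> (y \<in> N2 \<and> partner y = x)"
proof -
  have x_nbr: "x \<in> N y" using assms(1) adj_sym mem_N by blast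
  have "x \<noteq> v" using assms(2) by blast
  consider "y = v" | "y \<in> N1" | "y \<in> N2" using assms(3) by blast
  then show ?thesis
  proof cases
    case 2
    with x_nbr \<open>x \<noteq> v\<close> show ?thesis using N1_nbrs[OF 2] by simp
  next
    case 3
    with x_nbr \<open>x \<noteq> v\<close> show ?thesis using N2_nbrs[OF 3] by auto
  qed simp
qed

lemma N'_eq: "x \<notin> Y \<Longrightarrow> N' x = N x - Y"
  by (rule nbrs_del_verts)

lemma adj_in_V: "E a b \<Longrightarrow> a \<in> V \<and> b \<in> V"
  using graph unfolding simple_graph_def by blast

lemma outside_proper: "proper_coloring (del_verts_V V Y) (del_verts_E E Y) c \<phi>"
  using semi_pcf unfolding semi_pcf_coloring_def Let_def by (rule conjunct1)

lemma phi_less: "x \<in> V \<Longrightarrow> x \<notin> Y \<Longrightarrow> \<phi> x < c"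
  using outside_proper unfolding proper_coloring_def del_verts_V_def by blast

lemma phi_proper: "E x y \<Longrightarrow> x \<notin> Y \<Longrightarrow> y \<notin> Y \<Longrightarrow> \<phi> x \<noteq> \<phi> y"
  using outside_proper adj_in_V unfolding proper_coloring_def del_verts_V_def del_verts_E_def
  by blast

definition defective :: "'a \<Rightarrow> bool" where
  "defective x \<longleftrightarrow> \<not> has_unique_color \<phi> (N' x)"

lemma defective_exempt:
  assumes "x \<in> V" and "x \<notin> Y" and "defective x"
  shows "(\<exists>y\<in>Y. E x y) \<and> card (N' x) = 2"
proof -
  let ?Z = "{u \<in> del_verts_V V Y. deg (del_verts_V V Y) (del_verts_E E Y) u = 2}"
  have "\<forall>u \<in> del_verts_V V Y - (set_nbrs V E Y \<inter> ?Z). has_unique_color \<phi> (N' u)"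
    using semi_pcf unfolding semi_pcf_coloring_def Let_def by (rule conjunct2)
  moreover have "x \<in> del_verts_V V Y" using assms by (simp add: del_verts_V_def)
  ultimately have "x \<in> set_nbrs V E Y \<and> x \<in> ?Z"
    using assms(3) unfolding defective_def by blast
  then show ?thesis
    unfolding set_nbrs_def deg_def using mem_N adj_sym by blast
qed

lemma defective_nbrs_same_color:
  assumes "x \<in> V" and "x \<notin> Y" and "defective x" and "a \<in> N' x" and "b \<in> N' x"
  shows "\<phi> a = \<phi> b"
proof -
  obtain a' b' where "N' x = {a', b'}"
    using defective_exempt[OF assms(1-3)] card_2_iff by metis
  then show ?thesis
    using assms(3-5) has_unique_color_pair[of \<phi> a' b'] unfolding defective_def by auto
qed

definition key_color :: "'a \<Rightarrow> nat" where
  "key_color x = (if defective x then \<phi> (SOME u. u \<in> N' x)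
     else (SOME col. card {u \<in> N' x. \<phi> u = col} = 1))"

lemma key_color_unique:
  assumes "\<not> defective x"
  shows "\<exists>a. {u \<in> N' x. \<phi> u = key_color x} = {a}"
proof -
  have "\<exists>col. card {u \<in> N' x. \<phi> u = col} = 1"
    using assms unfolding defective_def has_unique_color_def by blast
  from someI_ex[OF this] show ?thesis
    using assms unfolding key_color_def by (simp add: card_1_singleton_iff)
qed

lemma key_color_defective:
  assumes "x \<in> V" and "x \<notin> Y" and "defective x" and "u \<in> N' x"
  shows "\<phi> u = key_color x"
  using defective_nbrs_same_color[OF assms(1-4) someI[of "\<lambda>u. u \<in> N' x", OF assms(4)]] assms(3)
  unfolding key_color_def by simp

text \<open>\<alpha> avoids \<phi>(R) for properness at v, the key colours of R so that v does not spoil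
  the unique colour of a vertex in R, and the colours of partners outside Y so that the two
  neighbours of a degree-2 neighbour of v get distinct colours.\<close>

lemma \<alpha>_budget:
  "card (\<phi> ` R \<union> key_color ` R \<union> \<phi> ` partner ` {u \<in> N2. partner u \<notin> Y}) < c"
proof -
  let ?P = "{u \<in> N2. partner u \<notin> Y}"
  have fin: "finite ?P" using finite_N2 by simp
  have "card (\<phi> ` partner ` ?P) \<le> card (partner ` ?P)"
    using fin by (intro card_image_le finite_imageI)
  also have "\<dots> \<le> card ?P" using fin by (rule card_image_le)
  also have "\<dots> \<le> card N2" using finite_N2 by (intro card_mono) auto
  finally have "card (\<phi> ` partner ` ?P) \<le> card N2" .
  moreover have "card (\<phi> ` R) \<le> card R" and "card (key_color ` R) \<le> card R"
    using finite_R by (auto intro: card_image_le)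
  moreover have "card (\<phi> ` R \<union> key_color ` R \<union> \<phi> ` partner ` ?P)
      \<le> card (\<phi> ` R) + card (key_color ` R) + card (\<phi> ` partner ` ?P)"
    by (meson card_Un_le add_right_mono order_trans)
  ultimately show ?thesis using few_high_degree_nbrs by linarith
qed

definition \<alpha> :: nat where
  "\<alpha> = fresh_color (\<phi> ` R \<union> key_color ` R \<union> \<phi> ` partner ` {u \<in> N2. partner u \<notin> Y})"

lemma \<alpha>_less: "\<alpha> < c"
  and \<alpha>_R: "x \<in> R \<Longrightarrow> \<alpha> \<noteq> \<phi> x \<and> \<alpha> \<noteq> key_color x"
  and \<alpha>_partner: "u \<in> N2 \<Longrightarrow> partner u \<notin> Y \<Longrightarrow> \<alpha> \<noteq> \<phi> (partner u)"
  using fresh_color_less[OF _ \<alpha>_budget] finite_R finite_N2 unfolding \<alpha>_def by auto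

definition \<delta> :: nat where
  "\<delta> = fresh_color ({\<alpha>, \<phi> (partner u0), key_color (partner u0)} \<union> \<phi> ` R)"

lemma \<delta>_budget: "card ({\<alpha>, \<phi> (partner u0), key_color (partner u0)} \<union> \<phi> ` R) < c"
proof -
  have "card {\<alpha>, \<phi> (partner u0), key_color (partner u0)} \<le> 3"
    using card_length[of "[\<alpha>, \<phi> (partner u0), key_color (partner u0)]"] by simp
  moreover have "card (\<phi> ` R) \<le> card R" using finite_R by (rule card_image_le)
  moreover have "1 \<le> card N2"
    using u0_deg_2 finite_N2 by (metis One_nat_def Suc_leI card_gt_0_iff empty_iff)
  ultimately show ?thesis
    using card_Un_le[of "{\<alpha>, \<phi> (partner u0), key_color (partner u0)}" "\<phi> ` R"]
      few_high_degree_nbrs five_colors by linarith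
qed

lemma \<delta>_less: "\<delta> < c"
  and \<delta>_ne: "\<delta> \<noteq> \<alpha>" "\<delta> \<noteq> \<phi> (partner u0)" "\<delta> \<noteq> key_color (partner u0)"
  and \<delta>_R: "x \<in> R \<Longrightarrow> \<delta> \<noteq> \<phi> x"
  using fresh_color_less[OF _ \<delta>_budget] finite_R unfolding \<delta>_def by auto

definition \<beta> :: nat where "\<beta> = fresh_color {\<alpha>, \<delta>}"

definition \<gamma> :: nat where "\<gamma> = fresh_color {\<alpha>, \<delta>, \<beta>}"

lemma \<beta>: "\<beta> < c" "\<beta> \<noteq> \<alpha>" "\<beta> \<noteq> \<delta>"
  using fresh_color_list_less[of "[\<alpha>, \<delta>]" c] five_colors unfolding \<beta>_def by auto

lemma \<gamma>: "\<gamma> < c" "\<gamma> \<noteq> \<alpha>" "\<gamma> \<noteq> \<delta>" "\<gamma> \<noteq> \<beta>"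
  using fresh_color_list_less[of "[\<alpha>, \<delta>, \<beta>]" c] five_colors unfolding \<gamma>_def by auto

definition outer_color :: "'a \<Rightarrow> nat" where
  "outer_color u = fresh_color {\<alpha>, \<delta>, \<phi> (partner u), key_color (partner u)}"

lemma outer_color: "outer_color u < c \<and> outer_color u \<notin> {\<alpha>, \<delta>, \<phi> (partner u), key_color (partner u)}"
  using fresh_color_list_less[of "[\<alpha>, \<delta>, \<phi> (partner u), key_color (partner u)]" c] five_colors
  unfolding outer_color_def by simp

definition attached :: "'a \<Rightarrow> 'a set" where
  "attached x = {u \<in> N2. partner u = x}"

definition lead :: "'a \<Rightarrow> 'a" where
  "lead x = (if u0 \<in> attached x then u0 else (SOME u. u \<in> attached x))"

lemma lead_attached: "u \<in> attached x \<Longrightarrow> lead x \<in> attached x"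
  unfolding lead_def by (auto intro: someI)

text \<open>Both vertices of a triangle v u (partner u) have the same representative, so exactly
  one of them gets \<beta>.\<close>

definition triangle_rep :: "'a \<Rightarrow> 'a" where
  "triangle_rep u = (SOME w. w \<in> {u, partner u})"

text \<open>A defective vertex x gets its unique colour from lead x: the other vertices of
  attached x avoid the colour of lead x, which in turn avoids key_color x.\<close>

definition \<psi> :: "'a \<Rightarrow> nat" where
  "\<psi> x = (if x = v then \<alpha> else if x \<in> N1 then \<beta> else if x = u0 then \<delta>
     else if x \<in> N2 then
       (if partner x \<in> N2 then (if triangle_rep x = x then \<beta> else \<gamma>)
        else if defective (partner x) \<and> x \<noteq> lead (partner x)
        then fresh_color {\<alpha>, \<delta>, \<phi> (partner x), outer_color (lead (partner x))}
        else outer_color x)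
     else \<phi> x)"

lemma u0_not_v: "u0 \<noteq> v" and u0_notin_N1: "u0 \<notin> N1"
  using u0_deg_2 v_notin_N2 N1_N2_disjoint by blast+

lemma \<psi>_outside: "x \<notin> Y \<Longrightarrow> \<psi> x = \<phi> x"
  unfolding \<psi>_def using u0_deg_2 by auto

lemma \<psi>_v: "\<psi> v = \<alpha>"
  unfolding \<psi>_def by simp

lemma \<psi>_N1: "u \<in> N1 \<Longrightarrow> \<psi> u = \<beta>"
  unfolding \<psi>_def using v_notin_N1 by auto

lemma \<psi>_u0: "\<psi> u0 = \<delta>"
  unfolding \<psi>_def using u0_not_v u0_notin_N1 by simp

lemma \<psi>_N2_cases:
  assumes "u \<in> N2" and "u \<noteq> u0"
  shows "\<psi> u = (if partner u \<in> N2 then (if triangle_rep u = u then \<beta> else \<gamma>)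
        else if defective (partner u) \<and> u \<noteq> lead (partner u)
        then fresh_color {\<alpha>, \<delta>, \<phi> (partner u), outer_color (lead (partner u))}
        else outer_color u)"
  unfolding \<psi>_def using assms v_notin_N2 N1_N2_disjoint by auto

lemma \<psi>_pendant:
  assumes "u \<in> N2" and "u \<noteq> u0" and "partner u \<notin> Y"
  shows "\<psi> u < c \<and> \<psi> u \<notin> {\<alpha>, \<delta>, \<phi> (partner u)}
    \<and> (\<not> defective (partner u) \<longrightarrow> \<psi> u \<noteq> key_color (partner u))"
proof (cases "defective (partner u) \<and> u \<noteq> lead (partner u)")
  case True
  then show ?thesis
    using \<psi>_N2_cases[OF assms(1,2)] assms(3) five_colors
      fresh_color_list_less[of "[\<alpha>, \<delta>, \<phi> (partner u), outer_color (lead (partner u))]" c]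
    by simp
next
  case False
  then show ?thesis
    using \<psi>_N2_cases[OF assms(1,2)] assms(3) outer_color[of u] by auto
qed

lemma \<psi>_N2:
  assumes "u \<in> N2"
  shows "\<psi> u < c" and "\<psi> u \<noteq> \<alpha>" and "u \<noteq> u0 \<Longrightarrow> \<psi> u \<noteq> \<delta>"
    and "partner u \<notin> Y \<Longrightarrow> \<psi> u \<noteq> \<phi> (partner u)"
    and "partner u \<notin> Y \<Longrightarrow> \<not> defective (partner u) \<Longrightarrow> \<psi> u \<noteq> key_color (partner u)"
proof -
  consider "u = u0" | "u \<noteq> u0" "partner u \<in> N2" | "u \<noteq> u0" "partner u \<notin> Y"
    using partner_in_Y[OF assms] by blast
  then have "\<psi> u < c \<and> \<psi> u \<noteq> \<alpha> \<and> (u \<noteq> u0 \<longrightarrow> \<psi> u \<noteq> \<delta>)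
    \<and> (partner u \<notin> Y \<longrightarrow> \<psi> u \<noteq> \<phi> (partner u))
    \<and> (partner u \<notin> Y \<and> \<not> defective (partner u) \<longrightarrow> \<psi> u \<noteq> key_color (partner u))"
  proof cases
    case 1
    then show ?thesis using \<psi>_u0 \<delta>_less \<delta>_ne by simp
  next
    case 2
    then show ?thesis using \<psi>_N2_cases[OF assms 2(1)] \<beta> \<gamma> by simp
  next
    case 3
    then show ?thesis using \<psi>_pendant[OF assms 3] by simp
  qed
  then show "\<psi> u < c" and "\<psi> u \<noteq> \<alpha>" and "u \<noteq> u0 \<Longrightarrow> \<psi> u \<noteq> \<delta>"
    and "partner u \<notin> Y \<Longrightarrow> \<psi> u \<noteq> \<phi> (partner u)"
    and "partner u \<notin> Y \<Longrightarrow> \<not> defective (partner u) \<Longrightarrow> \<psi> u \<noteq> key_color (partner u)"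
    by blast+
qed

lemma \<psi>_triangle:
  assumes "u \<in> N2" and "partner u \<in> N2"
  shows "\<psi> u \<noteq> \<psi> (partner u)"
proof -
  let ?w = "partner u"
  have partner_back: "partner ?w = u" using partner_in_Y[OF assms(1)] assms(2) by blast
  have "u \<noteq> ?w" using partner_adj[OF assms(1)] adj_irrefl by metis
  have same_rep: "triangle_rep ?w = triangle_rep u"
    unfolding triangle_rep_def partner_back by (simp add: insert_commute)
  have rep: "triangle_rep u \<in> {u, ?w}"
    unfolding triangle_rep_def by (rule someI[of _ u]) simp
  have \<psi>u: "u \<noteq> u0 \<Longrightarrow> \<psi> u = (if triangle_rep u = u then \<beta> else \<gamma>)"
    using \<psi>_N2_cases[OF assms(1)] assms(2) by simp
  have \<psi>w: "?w \<noteq> u0 \<Longrightarrow> \<psi> ?w = (if triangle_rep u = ?w then \<beta> else \<gamma>)"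
    using \<psi>_N2_cases[OF assms(2)] assms(1) partner_back same_rep by simp
  show ?thesis
    using \<psi>u \<psi>w rep \<open>u \<noteq> ?w\<close> \<psi>_u0 \<beta> \<gamma> by (cases "u = u0"; cases "?w = u0") auto
qed

lemma \<psi>_lead:
  assumes "x \<notin> Y" and "defective x" and "u \<in> attached x"
  shows "\<psi> (lead x) \<noteq> key_color x" and "u \<noteq> lead x \<Longrightarrow> \<psi> u \<noteq> \<psi> (lead x)"
proof -
  let ?l = "lead x"
  have l: "?l \<in> N2" "partner ?l = x" using lead_attached[OF assms(3)] by (auto simp: attached_def)
  have u: "u \<in> N2" "partner u = x" using assms(3) by (auto simp: attached_def)
  have "x \<notin> N2" using assms(1) by blast
  have \<psi>l: "\<psi> ?l = (if ?l = u0 then \<delta> else outer_color ?l)"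
    using \<psi>_u0 \<psi>_N2_cases[OF l(1)] l(2) \<open>x \<notin> N2\<close> by auto
  then show "\<psi> ?l \<noteq> key_color x"
    using \<delta>_ne(3) outer_color[of ?l] l(2) by (cases "?l = u0") auto
  assume "u \<noteq> ?l"
  then have "u \<noteq> u0" using assms(3) unfolding lead_def by auto
  then have "\<psi> u = fresh_color {\<alpha>, \<delta>, \<phi> x, outer_color ?l}"
    using \<psi>_N2_cases[OF u(1)] u(2) \<open>x \<notin> N2\<close> assms(2) \<open>u \<noteq> ?l\<close> by simp
  moreover have "fresh_color {\<alpha>, \<delta>, \<phi> x, outer_color ?l} \<notin> {\<alpha>, \<delta>, \<phi> x, outer_color ?l}"
    using fresh_color_list_less[of "[\<alpha>, \<delta>, \<phi> x, outer_color ?l]" c] five_colors by simp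
  ultimately show "\<psi> u \<noteq> \<psi> ?l" using \<psi>l by auto
qed

lemma \<psi>_less: "x \<in> V \<Longrightarrow> \<psi> x < c"
  using \<psi>_v \<alpha>_less \<psi>_N1 \<beta>(1) \<psi>_N2(1) \<psi>_outside phi_less by (cases "x \<in> Y") auto

lemma \<psi>_proper_at_Y:
  assumes "E x y" and "x \<in> Y"
  shows "\<psi> x \<noteq> \<psi> y"
proof -
  consider "x = v" | "x \<in> N1" | "x \<in> N2" using assms(2) by blast
  then show ?thesis
  proof cases
    case 1
    then have "y \<in> N1 \<or> y \<in> N2 \<or> y \<in> R"
      using assms(1) adj_irrefl mem_N by blast
    then show ?thesis
      using 1 \<psi>_v \<psi>_N1 \<beta>(2) \<psi>_N2(2) \<psi>_outside \<alpha>_R by fastforce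
  next
    case 2
    then have "y = v" using N1_nbrs[OF 2] assms(1) mem_N by blast
    then show ?thesis using 2 \<psi>_v \<psi>_N1 \<beta>(2) by simp
  next
    case 3
    then have "y = v \<or> y = partner x" using N2_nbrs[OF 3] assms(1) mem_N by blast
    moreover have "y = partner x \<Longrightarrow> y \<in> Y \<Longrightarrow> ?thesis"
      using \<psi>_triangle[OF 3] partner_in_Y[OF 3] by blast
    moreover have "y = partner x \<Longrightarrow> y \<notin> Y \<Longrightarrow> ?thesis"
      using \<psi>_N2(4)[OF 3] \<psi>_outside by simp
    ultimately show ?thesis using \<psi>_v \<psi>_N2(2)[OF 3] by auto
  qed
qed

lemma \<psi>_proper: "E x y \<Longrightarrow> \<psi> x \<noteq> \<psi> y"
  using \<psi>_proper_at_Y adj_sym \<psi>_outside phi_proper by metis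

lemma \<psi>_unique_at_v: "has_unique_color \<psi> (N v)"
proof (rule has_unique_colorI)
  show "u0 \<in> N v" using u0_deg_2 by (simp add: nbrs_deg_def)
  fix u assume u: "u \<in> N v" and "\<psi> u = \<psi> u0"
  then have "\<psi> u = \<delta>" by (simp add: \<psi>_u0)
  moreover have "u \<noteq> v" using u mem_N adj_irrefl by blast
  ultimately show "u = u0"
    using u \<psi>_N1 \<beta>(3) \<psi>_N2(3) \<psi>_outside \<delta>_R by fastforce
qed

lemma \<psi>_unique_at_N1: "u \<in> N1 \<Longrightarrow> has_unique_color \<psi> (N u)"
  using N1_nbrs has_unique_colorI[of v "{v}"] by simp

lemma \<psi>_unique_at_N2:
  assumes "u \<in> N2"
  shows "has_unique_color \<psi> (N u)"
proof -
  have "\<psi> (partner u) \<noteq> \<alpha>"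
  proof (cases "partner u \<in> Y")
    case True
    then show ?thesis using partner_in_Y[OF assms] \<psi>_N2(2) by blast
  next
    case False
    then show ?thesis using \<psi>_outside \<alpha>_partner[OF assms] by simp
  qed
  then show ?thesis
    using N2_nbrs[OF assms] \<psi>_v has_unique_colorI[of v "N u" \<psi>] by auto
qed

lemma outside_nbr:
  assumes "x \<notin> Y" and "u \<in> N x" and "u \<notin> Y"
  shows "u \<in> N' x" and "\<psi> u = \<phi> u"
  using assms N'_eq[OF assms(1)] \<psi>_outside[OF assms(3)] by simp_all

lemma \<psi>_unique_at_nondefective:
  assumes "x \<notin> Y" and "\<not> defective x"
  shows "has_unique_color \<psi> (N x)"
proof -
  obtain a where a: "{u \<in> N' x. \<phi> u = key_color x} = {a}"
    using key_color_unique[OF assms(2)] by blast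
  then have "a \<in> N' x" and "\<phi> a = key_color x" by blast+
  then have a_nbr: "a \<in> N x" and "a \<notin> Y" using N'_eq[OF assms(1)] by blast+
  show ?thesis
  proof (rule has_unique_colorI[OF a_nbr])
    fix u assume u: "u \<in> N x" and "\<psi> u = \<psi> a"
    then have \<psi>u: "\<psi> u = key_color x"
      using \<psi>_outside[OF \<open>a \<notin> Y\<close>] \<open>\<phi> a = key_color x\<close> by simp
    have "u \<notin> Y"
    proof
      assume "u \<in> Y"
      then consider "u = v" | "u \<in> N2" "partner u = x"
        using Y_nbr_of_outside u assms(1) mem_N by blast
      then show False
      proof cases
        case 1
        then have "x \<in> R" using u assms(1) mem_N adj_sym by blast
        then show False using \<psi>u \<psi>_v \<alpha>_R 1 by simp
      next
        case 2
        then show False using \<psi>_N2(5)[OF 2(1)] \<psi>u assms by simp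
      qed
    qed
    then have "u \<in> {u \<in> N' x. \<phi> u = key_color x}"
      using outside_nbr[OF assms(1) u] \<psi>u by simp
    then show "u = a" using a by blast
  qed
qed

lemma \<psi>_unique_at_defective_R:
  assumes "x \<in> V" and "x \<in> R" and "defective x"
  shows "has_unique_color \<psi> (N x)"
proof (rule has_unique_colorI)
  have "x \<notin> Y" using assms(2) by blast
  show "v \<in> N x" using assms(2) mem_N adj_sym by blast
  fix u assume u: "u \<in> N x" and "\<psi> u = \<psi> v"
  then have \<psi>u: "\<psi> u = \<alpha>" by (simp add: \<psi>_v)
  show "u = v"
  proof (rule ccontr)
    assume "u \<noteq> v"
    moreover have "u \<notin> N2" using \<psi>u \<psi>_N2(2) by blast
    ultimately have "u \<notin> Y" using Y_nbr_of_outside u \<open>x \<notin> Y\<close> mem_N by blast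
    then have "\<psi> u = key_color x"
      using key_color_defective[OF assms(1) \<open>x \<notin> Y\<close> assms(3)] outside_nbr[OF \<open>x \<notin> Y\<close> u]
      by simp
    then show False using \<psi>u \<alpha>_R[OF assms(2)] by simp
  qed
qed

lemma \<psi>_unique_at_defective_not_R:
  assumes "x \<in> V" and "x \<notin> Y" and "x \<notin> R" and "defective x"
  shows "has_unique_color \<psi> (N x)"
proof -
  have Y_nbr_attached: "u \<in> attached x" if "E x u" and "u \<in> Y" for u
  proof -
    have "u \<noteq> v" using that(1) assms(2,3) mem_N adj_sym by blast
    then show ?thesis
      using Y_nbr_of_outside[OF that(1) assms(2) that(2)] unfolding attached_def by blast
  qed
  obtain y where "y \<in> Y" and "E x y" using defective_exempt[OF assms(1,2,4)] by blast
  then have y: "y \<in> attached x" by (rule Y_nbr_attached[rotated])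
  have l: "lead x \<in> attached x" using y by (rule lead_attached)
  show ?thesis
  proof (rule has_unique_colorI)
    have "lead x \<in> N2" and "partner (lead x) = x" using l unfolding attached_def by blast+
    then have "E (lead x) x" using partner_adj by metis
    then show "lead x \<in> N x" using adj_sym mem_N by blast
    fix u assume u: "u \<in> N x" and \<psi>u: "\<psi> u = \<psi> (lead x)"
    show "u = lead x"
    proof (cases "u \<in> Y")
      case True
      then have "u \<in> attached x" using Y_nbr_attached u mem_N by blast
      then show ?thesis using \<psi>_lead(2)[OF assms(2,4)] \<psi>u by blast
    next
      case False
      then have "\<psi> u = key_color x"
        using key_color_defective[OF assms(1,2,4)] outside_nbr[OF assms(2) u] by simp
      then show ?thesis using \<psi>_lead(1)[OF assms(2,4) y] \<psi>u by simp
    qed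
  qed
qed

lemma \<psi>_pcf: "pcf_coloring V E c \<psi>"
  unfolding pcf_coloring_def proper_coloring_def
proof (intro conjI ballI impI)
  fix x assume "x \<in> V"
  then show "\<psi> x < c" by (rule \<psi>_less)
  show "has_unique_color \<psi> (N x)"
  proof (cases "x \<in> Y")
    case True
    then show ?thesis using \<psi>_unique_at_v \<psi>_unique_at_N1 \<psi>_unique_at_N2 by blast
  next
    case False
    then show ?thesis
      using \<open>x \<in> V\<close> \<psi>_unique_at_nondefective \<psi>_unique_at_defective_R
        \<psi>_unique_at_defective_not_R
      by blast
  qed
next
  fix x y assume "E x y"
  then show "\<psi> x \<noteq> \<psi> y" by (rule \<psi>_proper)
qed

end

theorem mainTheorem6:
  fixes V :: "'a set" and E :: "'a \<Rightarrow> 'a \<Rightarrow> bool" and c :: nat and v :: 'a and Y :: "'a set"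
  assumes "c \<ge> 5"
    and "simple_graph V E"
    and "v \<in> V"
    and "\<exists>u \<in> nbrs V E v. deg V E u = 2"
    and "Y = {v} \<union> nbrs_deg V E 1 v \<union> nbrs_deg V E 2 v"
    and "\<not> (\<exists>\<phi>. pcf_coloring V E c \<phi>)"
    and "\<exists>\<phi>. semi_pcf_coloring V E Y c \<phi>"
  shows "2 * int (deg V E v) - 2 * int (card (nbrs_deg V E 1 v)) - int (card (nbrs_deg V E 2 v)) \<ge> int c"
proof (rule ccontr)
  assume "\<not> ?thesis"
  then have few: "2 * card (nbrs V E v - Y) + card (nbrs_deg V E 2 v) < c"
    using deg_split_low_degree_nbrs[OF assms(2), of v] assms(5) by simp
  obtain u0 where "u0 \<in> nbrs_deg V E 2 v" using assms(4) by (auto simp: nbrs_deg_def)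
  moreover obtain \<phi> where "semi_pcf_coloring V E Y c \<phi>" using assms(7) by blast
  ultimately interpret semi_pcf_extension V E c v \<phi> u0
    using assms(1,2,5) few by unfold_locales simp_all
  show False using \<psi>_pcf assms(6) by blast
qed

end
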